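(* Fix $\omega$ and let $v$ be a blocked path. Define $\hat v(i)=v(i-\delta)+2\delta v'(i-\delta)$ and $\bar v^\delta[i]=\min\{j\in\delta\mathbb{Z}:\ j\ge \hat v(i)-\delta/2\}$ for $i\in\mathbb{Z}$. Let $w$ be the continuous function that is affine on each interval $[i-1+\delta,i+\delta]$, $i\in\mathbb{Z}$, with $w(i+\delta)=\hat v(i)$ for all $i$, and let $\bar w^\delta$ be the analogous function with $\bar w^\delta(i+\delta)=\bar v^\delta[i]$. Then $v\ge w$ and $v+\delta/2\ge \bar w^\delta$ on $\mathbb{R}$.
   Context: Fix $0<\delta\ll1/2$, $F>0$. Let $\mathbb{Z}^*=\mathbb{Z}+\tfrac12$, $b_{i,j}=(i,j)$; $\phi\in C_c^\infty(\mathbb{R}^2)$ nonnegative with support in $[-\delta,\delta]^2$, $\phi_{i,j}(x,s)=\phi((x,s)-b_{i,j})$; $(l(i,j)(\omega))_{(i,j)\in\mathbb{Z}\times\mathbb{Z}^*}$ nonnegative (i.i.d. exponential) random variables. For small $\varepsilon>0$ let $A=\mathbb{R}\setminus\bigcup_{i\in\mathbb{Z}}(i-\delta,i+\delta)$, $A_\varepsilon=\mathbb{R}\setminus\bigcup_{i\in\mathbb{Z}}(i-\delta-\varepsilon,i+\delta+\varepsilon)$, and $\chi_A^\varepsilon$ a smooth function with $\chi_{A_\varepsilon}\le\chi_A^\varepsilon\le\chi_A$. A blocked path is a function $v\in C^1_{loc}(\mathbb{R})$ such that for every $i\in\mathbb{Z}$: $v''(x)=-F\chi_A^\varepsilon(x)$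 on $(i+\delta,i+1-\delta)$ and $v''(x)=\sum_{j\in\mathbb{Z}^*}l(i,j)(\omega)\phi_{i,j}(x,v(x))$ on $(i-\delta,i+\delta)$. *)

theory Defs
  imports "HOL-Analysis.Analysis"
begin

definition smooth1 :: "(real \<Rightarrow> real) \<Rightarrow> bool" where
  "smooth1 f \<longleftrightarrow> (\<forall>n x. ((deriv ^^ n) f) differentiable (at x))"

definition pd1 :: "(real \<times> real \<Rightarrow> real) \<Rightarrow> real \<times> real \<Rightarrow> real" where
  "pd1 f p = deriv (\<lambda>t. f (t, snd p)) (fst p)"

definition pd2 :: "(real \<times> real \<Rightarrow> real) \<Rightarrow> real \<times> real \<Rightarrow> real" where
  "pd2 f p = deriv (\<lambda>t. f (fst p, t)) (snd p)"

fun pds :: "bool list \<Rightarrow> (real \<times> real \<Rightarrow> real) \<Rightarrow> real \<times> real \<Rightarrow> real" where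
  "pds [] f = f"
| "pds (b # bs) f = (if b then pd1 else pd2) (pds bs f)"

definition smooth2 :: "(real \<times> real \<Rightarrow> real) \<Rightarrow> bool" where
  "smooth2 f \<longleftrightarrow> (\<forall>bs. continuous_on UNIV (pds bs f)
      \<and> (\<forall>p. (\<lambda>t. pds bs f (t, snd p)) differentiable (at (fst p)))
      \<and> (\<forall>p. (\<lambda>t. pds bs f (fst p, t)) differentiable (at (snd p))))"

definition Zstar :: "real set" where
  "Zstar = {real_of_int k + 1/2 | k. True}"

definition setA :: "real \<Rightarrow> real set" where
  "setA d = - (\<Union>i::int. {real_of_int i - d <..< real_of_int i + d})"

definition blocked_path ::
  "real \<Rightarrow> real \<Rightarrow> (real \<times> real \<Rightarrow> real) \<Rightarrow> (int \<Rightarrow> real \<Rightarrow> real)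
   \<Rightarrow> (real \<Rightarrow> real) \<Rightarrow> (real \<Rightarrow> real) \<Rightarrow> bool" where
  "blocked_path \<delta> F \<phi> l chi v \<longleftrightarrow>
     (\<forall>x. v differentiable (at x)) \<and> continuous_on UNIV (deriv v) \<and>
     (\<forall>i::int. \<forall>x \<in> {real_of_int i + \<delta> <..< real_of_int i + 1 - \<delta>}.
         (deriv v has_real_derivative (- F * chi x)) (at x)) \<and>
     (\<forall>i::int. \<forall>x \<in> {real_of_int i - \<delta> <..< real_of_int i + \<delta>}.
         (deriv v has_real_derivative
            (\<Sum>\<^sub>\<infinity>j\<in>Zstar. l i j * \<phi> (x - real_of_int i, v x - j))) (at x))"

definition vhat :: "real \<Rightarrow> (real \<Rightarrow> real) \<Rightarrow> int \<Rightarrow> real" where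
  "vhat \<delta> v i = v (real_of_int i - \<delta>) + 2 * \<delta> * deriv v (real_of_int i - \<delta>)"

definition vbar :: "real \<Rightarrow> (real \<Rightarrow> real) \<Rightarrow> int \<Rightarrow> real" where
  "vbar \<delta> v i = (LEAST j. (\<exists>k::int. j = \<delta> * real_of_int k) \<and> j \<ge> vhat \<delta> v i - \<delta> / 2)"

definition pw_affine_interp :: "real \<Rightarrow> (int \<Rightarrow> real) \<Rightarrow> (real \<Rightarrow> real) \<Rightarrow> bool" where
  "pw_affine_interp \<delta> c g \<longleftrightarrow> continuous_on UNIV g \<and>
     (\<forall>i::int. \<exists>a b. \<forall>x \<in> {real_of_int i - 1 + \<delta> .. real_of_int i + \<delta>}. g x = a * x + b) \<and>
     (\<forall>i::int. g (real_of_int i + \<delta>) = c i)"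

end

theory Submission
  imports Defs
begin

text \<open>On each core [i - \<delta>, i + \<delta>] the second derivative of v is a sum of nonnegative terms,
  so v is convex there; on each gap [i + \<delta>, i + 1 - \<delta>] it is -F\<chi> \<le> 0, so v is concave.
  The value vhat(i) is the tangent to v at i - \<delta> evaluated at i + \<delta>, hence convexity on
  the cores gives v \<ge> w at every node i + \<delta>.  On a period [i - 1 + \<delta>, i + \<delta>] the affine w
  lies below this tangent (at the left node because v is concave on the gap and so below its
  tangent at the gap's right end i - \<delta>); on the core part v lies above the tangent, and on the
  gap part v is concave and above w at both ends.  Rounding up to the grid \<delta>\<int> raises the
  node values by at most \<delta>/2, and interpolation is monotone in the node values.\<close>

lemma above_tangent_of_mono_deriv:
  fixes f f' :: "real \<Rightarrow> real"
  assumes deriv: "\<And>x. x \<in> {a..b} \<Longrightarrow> (f has_real_derivative f' x) (at x)"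
    and mono: "mono_on {a..b} f'"
    and c: "c \<in> {a..b}" and x: "x \<in> {a..b}"
  shows "f c + (x - c) * f' c \<le> f x"
proof (cases x c rule: linorder_cases)
  case less
  then obtain z where z: "x < z" "z < c" "f c - f x = (c - x) * f' z"
    using MVT2[of x c f f'] deriv c x by force
  have "f' z \<le> f' c" using mono_onD[OF mono] z c x by auto
  with less have "(c - x) * f' z \<le> (c - x) * f' c" by (intro mult_left_mono) auto
  with z show ?thesis by (simp add: algebra_simps)
next
  case greater
  then obtain z where z: "c < z" "z < x" "f x - f c = (x - c) * f' z"
    using MVT2[of c x f f'] deriv c x by force
  have "f' c \<le> f' z" using mono_onD[OF mono] z c x by auto
  with greater have "(x - c) * f' c \<le> (x - c) * f' z" by (intro mult_left_mono) auto
  with z show ?thesis by linarith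
qed simp

lemma below_tangent_of_antimono_deriv:
  fixes f f' :: "real \<Rightarrow> real"
  assumes deriv: "\<And>x. x \<in> {a..b} \<Longrightarrow> (f has_real_derivative f' x) (at x)"
    and antimono: "antimono_on {a..b} f'"
    and c: "c \<in> {a..b}" and x: "x \<in> {a..b}"
  shows "f x \<le> f c + (x - c) * f' c"
proof -
  have "- f c + (x - c) * - f' c \<le> - f x"
  proof (rule above_tangent_of_mono_deriv[OF _ _ c x])
    show "((\<lambda>x. - f x) has_real_derivative - f' y) (at y)" if "y \<in> {a..b}" for y
      using deriv[OF that] by (rule DERIV_minus)
    show "mono_on {a..b} (\<lambda>x. - f' x)"
      using antimono by (auto intro!: mono_onI dest: monotone_onD)
  qed
  then show ?thesis by simp
qed

lemma concave_on_of_antimono_deriv: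
  fixes f f' :: "real \<Rightarrow> real"
  assumes deriv: "\<And>x. x \<in> {a..b} \<Longrightarrow> (f has_real_derivative f' x) (at x)"
    and antimono: "antimono_on {a..b} f'"
  shows "concave_on {a..b} f"
  unfolding concave_on_def
proof (rule convex_on_realI)
  show "((\<lambda>x. - f x) has_real_derivative - f' x) (at x)" if "x \<in> {a..b}" for x
    using deriv[OF that] by (rule DERIV_minus)
  show "- f' x \<le> - f' y" if "x \<in> {a..b}" "y \<in> {a..b}" "x \<le> y" for x y
    using monotone_onD[OF antimono that] by simp
qed simp

lemma concave_on_nonneg_Icc:
  fixes f :: "real \<Rightarrow> real"
  assumes f: "concave_on {a..b} f" and "0 \<le> f a" "0 \<le> f b" and x: "x \<in> {a..b}"
  shows "0 \<le> f x"
proof (cases "a = b")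
  case True
  with x assms show ?thesis by simp
next
  case False
  with x have ab: "a < b" by auto
  define t where "t = (x - a) / (b - a)"
  have t: "0 \<le> t" "t \<le> 1" using x ab by (auto simp: t_def field_simps)
  have "t * (b - a) = x - a" using ab by (simp add: t_def)
  then have "x = (1 - t) *\<^sub>R a + t *\<^sub>R b" by (simp add: algebra_simps)
  then have "(1 - t) * f a + t * f b \<le> f x"
    using concave_onD[OF f t] ab by simp
  moreover have "0 \<le> (1 - t) * f a + t * f b" using t assms by simp
  ultimately show ?thesis by linarith
qed

lemma affine_nonneg_Icc:
  fixes p q a b x :: real
  assumes "0 \<le> p * a + q" "0 \<le> p * b + q" and "x \<in> {a..b}"
  shows "0 \<le> p * x + q"
proof (rule concave_on_nonneg_Icc[where f = "\<lambda>y. p * y + q", OF _ assms])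
  show "concave_on {a..b} (\<lambda>y. p * y + q)"
    by (rule concave_on_of_antimono_deriv[where f' = "\<lambda>_. p"])
       (auto intro!: derivative_eq_intros monotone_onI)
qed

lemma affine_le_of_concave_then_convex:
  fixes v v' w :: "real \<Rightarrow> real"
  assumes deriv: "\<And>x. x \<in> {a..c} \<Longrightarrow> (v has_real_derivative v' x) (at x)"
    and concave: "antimono_on {a..b} v'" and convex: "mono_on {b..c} v'"
    and b: "b \<in> {a..c}"
    and w: "\<And>x. x \<in> {a..c} \<Longrightarrow> w x = p * x + q"
    and wa: "w a \<le> v a" and wc: "w c \<le> v b + (c - b) * v' b"
    and x: "x \<in> {a..c}"
  shows "w x \<le> v x"
proof -
  define T where "T y = v b + (y - b) * v' b" for y
  have va_le_T: "v a \<le> T a"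
    unfolding T_def using b deriv
    by (intro below_tangent_of_antimono_deriv[OF _ concave]) auto
  have w_le_T: "w y \<le> T y" if y: "y \<in> {a..c}" for y
  proof -
    have "0 \<le> (v' b - p) * y + (v b - b * v' b - q)"
    proof (rule affine_nonneg_Icc[OF _ _ y])
      have "(v' b - p) * a + (v b - b * v' b - q) = T a - (p * a + q)"
        by (simp add: T_def algebra_simps)
      with wa va_le_T w[of a] b show "0 \<le> (v' b - p) * a + (v b - b * v' b - q)"
        by auto
      have "(v' b - p) * c + (v b - b * v' b - q) = T c - (p * c + q)"
        by (simp add: T_def algebra_simps)
      with wc w[of c] b show "0 \<le> (v' b - p) * c + (v b - b * v' b - q)"
        by (auto simp: T_def)
    qed
    with w[OF y] show ?thesis by (simp add: T_def algebra_simps)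
  qed
  consider "x \<in> {b..c}" | "x \<in> {a..b}" using x b by fastforce
  then show ?thesis
  proof cases
    case 1
    then have "T x \<le> v x"
      unfolding T_def using b deriv
      by (intro above_tangent_of_mono_deriv[OF _ convex]) auto
    with w_le_T[OF x] show ?thesis by linarith
  next
    case 2
    have "concave_on {a..b} (\<lambda>y. v y - (p * y + q))"
    proof (rule concave_on_of_antimono_deriv)
      show "((\<lambda>y. v y - (p * y + q)) has_real_derivative v' y - p) (at y)"
        if "y \<in> {a..b}" for y
        using that b by (auto intro!: derivative_eq_intros deriv)
      show "antimono_on {a..b} (\<lambda>y. v' y - p)"
        using monotone_onD[OF concave] by (intro monotone_onI) auto
    qed
    moreover have "w b \<le> v b" using w_le_T[OF b] by (simp add: T_def)
    moreover have "w a = p * a + q" "w b = p * b + q" using w b by auto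
    ultimately have "0 \<le> v x - (p * x + q)"
      using wa by (intro concave_on_nonneg_Icc[where f = "\<lambda>y. v y - (p * y + q)", OF _ _ _ 2])
        simp_all
    with w[OF x] show ?thesis by simp
  qed
qed

lemma mono_on_Icc_of_deriv_nonneg:
  fixes g g' :: "real \<Rightarrow> real"
  assumes cont: "continuous_on {a..b} g"
    and deriv: "\<And>x. x \<in> {a<..<b} \<Longrightarrow> (g has_real_derivative g' x) (at x)"
    and nonneg: "\<And>x. x \<in> {a<..<b} \<Longrightarrow> 0 \<le> g' x"
  shows "mono_on {a..b} g"
proof (rule mono_onI)
  fix r s assume rs: "r \<in> {a..b}" "s \<in> {a..b}" "r \<le> s"
  show "g r \<le> g s"
  proof (rule DERIV_nonneg_imp_increasing_open[OF \<open>r \<le> s\<close>])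
    show "\<exists>y. (g has_real_derivative y) (at x) \<and> 0 \<le> y" if "r < x" "x < s" for x
    proof -
      from that rs have "x \<in> {a<..<b}" by auto
      with deriv nonneg show ?thesis by blast
    qed
    show "continuous_on {r..s} g"
      using rs by (auto intro: continuous_on_subset[OF cont])
  qed
qed

lemma antimono_on_Icc_of_deriv_nonpos:
  fixes g g' :: "real \<Rightarrow> real"
  assumes cont: "continuous_on {a..b} g"
    and deriv: "\<And>x. x \<in> {a<..<b} \<Longrightarrow> (g has_real_derivative g' x) (at x)"
    and nonpos: "\<And>x. x \<in> {a<..<b} \<Longrightarrow> g' x \<le> 0"
  shows "antimono_on {a..b} g"
proof -
  have "mono_on {a..b} (\<lambda>x. - g x)"
    using cont deriv nonpos
    by (intro mono_on_Icc_of_deriv_nonneg[where g' = "\<lambda>x. - g' x"])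
       (auto intro: continuous_intros DERIV_minus)
  then show ?thesis by (auto intro!: monotone_onI dest: mono_onD)
qed

lemma blocked_path_has_deriv:
  assumes "blocked_path \<delta> F \<phi> l chi v"
  shows "(v has_real_derivative deriv v x) (at x)"
  using assms by (simp add: blocked_path_def DERIV_deriv_iff_real_differentiable)

lemma blocked_path_deriv_mono_on:
  assumes v: "blocked_path \<delta> F \<phi> l chi v"
    and \<phi>: "\<And>p. 0 \<le> \<phi> p" and l: "\<And>j. j \<in> Zstar \<Longrightarrow> 0 \<le> l i j"
  shows "mono_on {real_of_int i - \<delta> .. real_of_int i + \<delta>} (deriv v)"
proof (rule mono_on_Icc_of_deriv_nonneg)
  show "continuous_on {real_of_int i - \<delta> .. real_of_int i + \<delta>} (deriv v)"
    using v by (auto simp: blocked_path_def intro: continuous_on_subset)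
  show "(deriv v has_real_derivative
          (\<Sum>\<^sub>\<infinity>j\<in>Zstar. l i j * \<phi> (x - real_of_int i, v x - j))) (at x)"
    if "x \<in> {real_of_int i - \<delta> <..< real_of_int i + \<delta>}" for x
    using v that by (simp add: blocked_path_def)
  show "0 \<le> (\<Sum>\<^sub>\<infinity>j\<in>Zstar. l i j * \<phi> (x - real_of_int i, v x - j))" for x
    using \<phi> l by (intro infsum_nonneg mult_nonneg_nonneg)
qed

lemma blocked_path_deriv_antimono_on:
  assumes v: "blocked_path \<delta> F \<phi> l chi v"
    and F: "0 \<le> F" and chi: "\<And>x. 0 \<le> chi x"
  shows "antimono_on {real_of_int i + \<delta> .. real_of_int i + 1 - \<delta>} (deriv v)"
proof (rule antimono_on_Icc_of_deriv_nonpos)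
  show "continuous_on {real_of_int i + \<delta> .. real_of_int i + 1 - \<delta>} (deriv v)"
    using v by (auto simp: blocked_path_def intro: continuous_on_subset)
  show "(deriv v has_real_derivative - F * chi x) (at x)"
    if "x \<in> {real_of_int i + \<delta> <..< real_of_int i + 1 - \<delta>}" for x
    using v that by (simp add: blocked_path_def)
  show "- F * chi x \<le> 0" for x
    using F chi[of x] by simp
qed

lemma pw_affine_interp_on_period:
  assumes "pw_affine_interp \<delta> c g"
  obtains p q where "\<And>y. y \<in> {real_of_int i - 1 + \<delta> .. real_of_int i + \<delta>} \<Longrightarrow> g y = p * y + q"
    and "g (real_of_int i - 1 + \<delta>) = c (i - 1)" and "g (real_of_int i + \<delta>) = c i"
proof -
  from assms obtain p q
    where "\<forall>y \<in> {real_of_int i - 1 + \<delta> .. real_of_int i + \<delta>}. g y = p * y + q"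
    unfolding pw_affine_interp_def by blast
  moreover have "g (real_of_int (i - 1) + \<delta>) = c (i - 1)" "g (real_of_int i + \<delta>) = c i"
    using assms by (simp_all only: pw_affine_interp_def)
  ultimately show ?thesis
    using that by simp
qed

lemma mem_period_ceiling: "x \<in> {real_of_int \<lceil>x - \<delta>\<rceil> - 1 + \<delta> .. real_of_int \<lceil>x - \<delta>\<rceil> + \<delta>}"
  using ceiling_correct[of "x - \<delta>"] by simp linarith

lemma pw_affine_interp_mono:
  assumes g: "pw_affine_interp \<delta> c g" and h: "pw_affine_interp \<delta> d h"
    and le: "\<And>i. c i \<le> d i"
  shows "g x \<le> h x"
proof -
  define i where "i = \<lceil>x - \<delta>\<rceil>"
  obtain p q where g_eq: "\<And>y. y \<in> {real_of_int i - 1 + \<delta> .. real_of_int i + \<delta>} \<Longrightarrow> g y = p * y + q"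
    and g_ends: "g (real_of_int i - 1 + \<delta>) = c (i - 1)" "g (real_of_int i + \<delta>) = c i"
    using pw_affine_interp_on_period[OF g, where i = i] by blast
  obtain p' q' where h_eq: "\<And>y. y \<in> {real_of_int i - 1 + \<delta> .. real_of_int i + \<delta>} \<Longrightarrow> h y = p' * y + q'"
    and h_ends: "h (real_of_int i - 1 + \<delta>) = d (i - 1)" "h (real_of_int i + \<delta>) = d i"
    using pw_affine_interp_on_period[OF h, where i = i] by blast
  have x: "x \<in> {real_of_int i - 1 + \<delta> .. real_of_int i + \<delta>}"
    unfolding i_def by (rule mem_period_ceiling)
  have "0 \<le> (p' - p) * x + (q' - q)"
  proof (rule affine_nonneg_Icc[OF _ _ x])
    show "0 \<le> (p' - p) * (real_of_int i - 1 + \<delta>) + (q' - q)"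
      using g_eq h_eq g_ends h_ends le[of "i - 1"] by (simp add: algebra_simps)
    show "0 \<le> (p' - p) * (real_of_int i + \<delta>) + (q' - q)"
      using g_eq h_eq g_ends h_ends le[of i] by (simp add: algebra_simps)
  qed
  with g_eq[OF x] h_eq[OF x] show ?thesis by (simp add: algebra_simps)
qed

lemma pw_affine_interp_add_const:
  assumes "pw_affine_interp \<delta> c g"
  shows "pw_affine_interp \<delta> (\<lambda>i. c i + k) (\<lambda>x. g x + k)"
  unfolding pw_affine_interp_def
proof (intro conjI allI)
  show "continuous_on UNIV (\<lambda>x. g x + k)"
    using assms by (auto simp: pw_affine_interp_def intro!: continuous_intros)
  fix i :: int
  obtain p q where "\<forall>x \<in> {real_of_int i - 1 + \<delta> .. real_of_int i + \<delta>}. g x = p * x + q"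
    using assms unfolding pw_affine_interp_def by blast
  then show "\<exists>p q. \<forall>x \<in> {real_of_int i - 1 + \<delta> .. real_of_int i + \<delta>}. g x + k = p * x + q"
    by (intro exI[of _ p] exI[of _ "q + k"]) auto
  show "g (real_of_int i + \<delta>) + k = c i + k"
    using assms by (simp add: pw_affine_interp_def)
qed

lemma Least_multiple_ge:
  fixes \<delta> y :: real
  assumes "0 < \<delta>"
  shows "(LEAST j. (\<exists>k::int. j = \<delta> * real_of_int k) \<and> y \<le> j) = \<delta> * real_of_int \<lceil>y / \<delta>\<rceil>"
proof (rule Least_equality)
  have "\<delta> * (y / \<delta>) \<le> \<delta> * real_of_int \<lceil>y / \<delta>\<rceil>"
    using assms by (intro mult_left_mono) auto
  with assms show "(\<exists>k::int. \<delta> * real_of_int \<lceil>y / \<delta>\<rceil> = \<delta> * real_of_int k) \<and> y \<le> \<delta> * real_of_int \<lceil>y / \<delta>\<rceil>"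
    by auto
next
  fix j assume "(\<exists>k::int. j = \<delta> * real_of_int k) \<and> y \<le> j"
  then obtain k :: int where k: "j = \<delta> * real_of_int k" "y \<le> j" by auto
  with assms have "\<lceil>y / \<delta>\<rceil> \<le> k" by (simp add: ceiling_le_iff field_simps)
  with assms k show "\<delta> * real_of_int \<lceil>y / \<delta>\<rceil> \<le> j" by simp
qed

lemma vbar_le_vhat:
  assumes "0 < \<delta>"
  shows "vbar \<delta> v i \<le> vhat \<delta> v i + \<delta> / 2"
proof -
  define y where "y = vhat \<delta> v i - \<delta> / 2"
  have "real_of_int \<lceil>y / \<delta>\<rceil> < y / \<delta> + 1" by linarith
  with assms have "\<delta> * real_of_int \<lceil>y / \<delta>\<rceil> < y + \<delta>" by (simp add: field_simps)
  then show ?thesis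
    using Least_multiple_ge[OF assms, of y] by (simp add: vbar_def y_def)
qed

lemma blocked_path_ge_interp:
  assumes \<delta>: "0 < \<delta>" "\<delta> < 1/2"
    and v: "blocked_path \<delta> F \<phi> l chi v"
    and \<phi>: "\<And>p. 0 \<le> \<phi> p" and l: "\<And>i j. j \<in> Zstar \<Longrightarrow> 0 \<le> l i j"
    and F: "0 \<le> F" and chi: "\<And>x. 0 \<le> chi x"
    and w: "pw_affine_interp \<delta> (vhat \<delta> v) w"
  shows "w x \<le> v x"
proof -
  define i where "i = \<lceil>x - \<delta>\<rceil>"
  define a b c where "a = real_of_int i - 1 + \<delta>" and "b = real_of_int i - \<delta>"
    and "c = real_of_int i + \<delta>"
  have x: "x \<in> {a..c}" unfolding a_def c_def i_def by (rule mem_period_ceiling)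
  have b: "b \<in> {a..c}" using \<delta> by (simp add: a_def b_def c_def)
  obtain p q where w_eq: "\<And>y. y \<in> {a..c} \<Longrightarrow> w y = p * y + q"
    and wa: "w a = vhat \<delta> v (i - 1)" and wc: "w c = vhat \<delta> v i"
    using pw_affine_interp_on_period[OF w, where i = i] unfolding a_def c_def by blast
  have deriv: "(v has_real_derivative deriv v y) (at y)" for y
    using v by (rule blocked_path_has_deriv)
  have concave: "antimono_on {a..b} (deriv v)"
    using blocked_path_deriv_antimono_on[OF v F chi, of "i - 1"]
    by (simp add: a_def b_def algebra_simps)
  have convex: "mono_on {b..c} (deriv v)"
    using blocked_path_deriv_mono_on[OF v \<phi> l, of i] by (simp add: b_def c_def)
  have "w a \<le> v a"
  proof -
    let ?e = "real_of_int (i - 1) - \<delta>"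
    have "v ?e + (a - ?e) * deriv v ?e \<le> v a"
      using blocked_path_deriv_mono_on[OF v \<phi> l, of "i - 1"] \<delta>
      by (intro above_tangent_of_mono_deriv[OF deriv]) (auto simp: a_def)
    then show ?thesis unfolding wa by (simp add: vhat_def a_def algebra_simps)
  qed
  moreover have "w c = v b + (c - b) * deriv v b"
    unfolding wc by (simp add: vhat_def b_def c_def)
  ultimately show ?thesis
    by (intro affine_le_of_concave_then_convex[OF deriv concave convex b w_eq _ _ x]) simp_all
qed

theorem mainTheorem4:
  fixes \<delta> F \<epsilon> :: real
    and \<phi> :: "real \<times> real \<Rightarrow> real"
    and l :: "int \<Rightarrow> real \<Rightarrow> real"
    and chi v w wbar :: "real \<Rightarrow> real"
  assumes "0 < \<delta>" and "\<delta> < 1/2" and "0 < F" and "0 < \<epsilon>"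
    and "smooth2 \<phi>" and "\<forall>p. \<phi> p \<ge> 0"
    and "\<forall>x s. \<phi> (x, s) \<noteq> 0 \<longrightarrow> \<bar>x\<bar> \<le> \<delta> \<and> \<bar>s\<bar> \<le> \<delta>"
    and "\<forall>i. \<forall>j\<in>Zstar. l i j \<ge> 0"
    and "smooth1 chi"
    and "\<forall>x. indicator (setA (\<delta> + \<epsilon>)) x \<le> chi x \<and> chi x \<le> indicator (setA \<delta>) x"
    and "blocked_path \<delta> F \<phi> l chi v"
    and "pw_affine_interp \<delta> (vhat \<delta> v) w"
    and "pw_affine_interp \<delta> (vbar \<delta> v) wbar"
  shows "(\<forall>x. v x \<ge> w x) \<and> (\<forall>x. v x + \<delta> / 2 \<ge> wbar x)"
proof -
  have chi_nonneg: "0 \<le> chi x" for x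
    using assms(10) by (meson indicator_pos_le order_trans)
  have v_ge_w: "w x \<le> v x" for x
    using assms(3,6,8)
    by (intro blocked_path_ge_interp[OF assms(1,2,11) _ _ _ chi_nonneg assms(12)]) auto
  have "wbar x \<le> w x + \<delta> / 2" for x
    using vbar_le_vhat[OF assms(1)]
    by (intro pw_affine_interp_mono[OF assms(13) pw_affine_interp_add_const[OF assms(12)]])
  with v_ge_w have "wbar x \<le> v x + \<delta> / 2" for x
    by (meson add_right_mono order_trans)
  with v_ge_w show ?thesis by blast
qed

end
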